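(* Let $c\ge0$, $d>0$, $\beta>0$, and let $\Delta_{q_\beta}$ denote the discriminant (in $\mu$) of $q_\beta(\mu):=\mu^4+2d\mu^3+(2c+d^2)\mu^2+d(\beta/2+2c)\mu+c(\beta+c)$, regarded as a function of $d$. Then: (i) For $\beta<4c$, $\Delta_{q_\beta}=0$ has a unique non-negative solution $d_1\in(0,2\sqrt{c})$; set $d_2=d_3=\infty$. (ii) For $4c\le\beta<8c$, $\Delta_{q_\beta}=0$ has the three non-negative solutions $d_1\in(0,2\sqrt{c})$, $d_2\in(2\sqrt{c},2\sqrt{\beta}]$ and $d_3\in[2\sqrt{\beta},\infty)$. (iii) For $\beta\ge8c>0$, $\Delta_{q_\beta}=0$ has two non-negative solutions $d_1\in(0,2\sqrt{c})$, $d_2\in(2\sqrt{c},2\sqrt{\beta}]$; set $d_3=\infty$. (iv) For $c=0$, $\Delta_{q_\beta}=0$ has two non-negative solutions $d_1=0$ and $d_2=\sqrt{27\beta/8}$; set $d_3=\infty$. (v) The polynomial $q_\beta$ has no real roots if $d<d_1$ and four real roots if $d_2\le d\le d_3$; in all other cases $q_\beta$ has two real roots. *)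

theory Defs
  imports "HOL-Analysis.Analysis" "HOL-Computational_Algebra.Polynomial"
begin

text \<open>Discriminant of the quartic a x^4 + b x^3 + c x^2 + d x + e (standard formula,
  equal to a^6 times the product of the squared differences of the complex roots).\<close>
definition quartic_disc :: "real \<Rightarrow> real \<Rightarrow> real \<Rightarrow> real \<Rightarrow> real \<Rightarrow> real" where
  "quartic_disc a b c d e =
     256*a^3*e^3 - 192*a^2*b*d*e^2 - 128*a^2*c^2*e^2 + 144*a^2*c*d^2*e - 27*a^2*d^4
   + 144*a*b^2*c*e^2 - 6*a*b^2*d^2*e - 80*a*b*c^2*d*e + 18*a*b*c*d^3 + 16*a*c^4*e
   - 4*a*c^3*d^2 - 27*b^4*e^2 + 18*b^3*c*d*e - 4*b^3*d^3 - 4*b^2*c^3*e + b^2*c^2*d^2"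

definition qbeta :: "real \<Rightarrow> real \<Rightarrow> real \<Rightarrow> real poly" where
  "qbeta \<beta> c d = [: c*(\<beta>+c), d*(\<beta>/2 + 2*c), 2*c + d^2, 2*d, 1 :]"

definition disc_qbeta :: "real \<Rightarrow> real \<Rightarrow> real \<Rightarrow> real" where
  "disc_qbeta \<beta> c d = quartic_disc 1 (2*d) (2*c + d^2) (d*(\<beta>/2 + 2*c)) (c*(\<beta>+c))"

definition num_real_roots :: "real poly \<Rightarrow> nat" where
  "num_real_roots p = (\<Sum>x\<in>{x. poly p x = 0}. order x p)"

end

theory Submission
  imports Defs
begin

(* Ferrari's method splits q_beta into two real monic quadratics with distinct linear coefficients.
   The discriminant of such a product is D D' R^2, where D and D' are the discriminants of the
   factors and R is their resultant; R = 0 would give a common root, which is then real. Both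
   factors have real roots only if d^2 \<ge> 4 c, and for d^2 \<ge> 4 c the quartic takes a
   non-positive value, so the sign of the discriminant decides between 0, 2 and 4 real roots.
   As a function of d the discriminant is beta^2 P(d^2) for a cubic P. On [0, 4 c] the cubic
   decreases from P 0 > 0 to P (4 c) = -27 beta^2 c^2 and so has a single root d1^2 there. For
   beta < 4 c, P < 0 on [4 c, \<infinity>) by completing the square in beta; for beta \<ge> 4 c the sign
   of P on [4 c, \<infinity>) is that of the quadratic P(x) / (x - d1^2), which is negative at 4 c,
   non-negative at 4 beta, and concave exactly when beta < 8 c. *)

lemma num_real_roots_mult:
  fixes p q :: "real poly"
  assumes "p \<noteq> 0" "q \<noteq> 0"
  shows "num_real_roots (p * q) = num_real_roots p + num_real_roots q"
proof -
  let ?Rp = "{x. poly p x = 0}" and ?Rq = "{x. poly q x = 0}"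
  have fin: "finite ?Rp" "finite ?Rq"
    using assms by (simp_all add: poly_roots_finite)
  have "num_real_roots (p * q) = (\<Sum>x\<in>?Rp \<union> ?Rq. order x p + order x q)"
    unfolding num_real_roots_def using assms by (intro sum.cong) (auto simp: order_mult)
  also have "\<dots> = (\<Sum>x\<in>?Rp \<union> ?Rq. order x p) + (\<Sum>x\<in>?Rp \<union> ?Rq. order x q)"
    by (rule sum.distrib)
  also have "(\<Sum>x\<in>?Rp \<union> ?Rq. order x p) = (\<Sum>x\<in>?Rp. order x p)"
    using fin by (intro sum.mono_neutral_right) (auto simp: order_root)
  also have "(\<Sum>x\<in>?Rp \<union> ?Rq. order x q) = (\<Sum>x\<in>?Rq. order x q)"
    using fin by (intro sum.mono_neutral_right) (auto simp: order_root)
  finally show ?thesis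
    unfolding num_real_roots_def .
qed

lemma num_real_roots_linear:
  fixes a b :: real
  assumes "b \<noteq> 0"
  shows "num_real_roots [:a, b:] = 1"
proof -
  define z where "z = -a/b"
  have linear: "[:a, b:] = smult b [:-z, 1:]"
    unfolding z_def using assms by simp
  have "{x. poly [:a, b:] x = 0} = {z}"
    unfolding linear using assms by auto
  moreover have "order z [:a, b:] = 1"
    unfolding linear order_smult[OF assms] using order_power_n_n[of z 1] by simp
  ultimately show ?thesis
    unfolding num_real_roots_def by simp
qed

lemma monic_quadratic_completed_square:
  "4 * (x^2 + p*x + r) = (2*x + p)^2 - (p^2 - 4*r :: real)"
  by (simp add: algebra_simps power2_eq_square)

lemma monic_quadratic_pos:
  fixes x p r :: real
  assumes "p^2 - 4*r < 0"
  shows "0 < x^2 + p*x + r"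
  using monic_quadratic_completed_square[of x p r] zero_le_power2[of "2*x + p"] assms
  by (smt (verit))

lemma monic_quadratic_neg_imp_disc_pos:
  fixes x p r :: real
  assumes "x^2 + p*x + r < 0"
  shows "0 < p^2 - 4*r"
  using monic_quadratic_completed_square[of x p r] zero_le_power2[of "2*x + p"] assms
  by (smt (verit))

lemma num_real_roots_monic_quadratic:
  fixes p r :: real
  shows "num_real_roots [:r, p, 1:] = (if 0 \<le> p^2 - 4*r then 2 else 0)"
proof (cases "0 \<le> p^2 - 4*r")
  case True
  define s where "s = sqrt (p^2 - 4*r)"
  have "s^2 = p^2 - 4*r"
    unfolding s_def using True by simp
  then have factor: "[:r, p, 1:] = [:-((s - p)/2), 1:] * [:-((- p - s)/2), 1:]"
    by (simp add: field_simps power2_eq_square)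
  have "num_real_roots [:r, p, 1:] = 2"
    unfolding factor by (subst num_real_roots_mult) (simp_all add: num_real_roots_linear)
  with True show ?thesis
    by simp
next
  case False
  then have "poly [:r, p, 1:] x \<noteq> 0" for x
    using monic_quadratic_pos[of p r x] by (simp add: algebra_simps power2_eq_square)
  with False show ?thesis
    unfolding num_real_roots_def by simp
qed

lemma num_real_roots_monic_quadratic_product:
  fixes p r p' r' :: real
  shows "num_real_roots ([:r, p, 1:] * [:r', p', 1:]) =
    (if 0 \<le> p^2 - 4*r then 2 else 0) + (if 0 \<le> p'^2 - 4*r' then 2 else 0)"
  by (subst num_real_roots_mult) (simp_all add: num_real_roots_monic_quadratic)

lemma poly_monic_quadratic_product:
  "poly ([:r, p, 1:] * [:r', p', 1:]) x = (x^2 + p*x + r) * (x^2 + p'*x + (r'::real))"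
  by (simp add: algebra_simps power2_eq_square)

lemma monic_quadratic_product_nonpos_imp_disc_nonneg:
  fixes p r p' r' x :: real
  assumes "poly ([:r, p, 1:] * [:r', p', 1:]) x \<le> 0"
  shows "0 \<le> p^2 - 4*r \<or> 0 \<le> p'^2 - 4*r'"
proof -
  have "x^2 + p*x + r \<le> 0 \<or> x^2 + p'*x + r' \<le> 0"
    using assms unfolding poly_monic_quadratic_product by (auto simp: mult_le_0_iff)
  then show ?thesis
    using monic_quadratic_pos[of p r x] monic_quadratic_pos[of p' r' x] by (meson not_le)
qed

lemma monic_quadratic_product_neg_imp_disc_pos:
  fixes p r p' r' x :: real
  assumes "poly ([:r, p, 1:] * [:r', p', 1:]) x < 0"
  shows "0 < p^2 - 4*r \<or> 0 < p'^2 - 4*r'"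
  using assms monic_quadratic_neg_imp_disc_pos[of x p r] monic_quadratic_neg_imp_disc_pos[of x p' r']
  unfolding poly_monic_quadratic_product by (auto simp: mult_less_0_iff)

definition monic_quadratic_resultant :: "real \<Rightarrow> real \<Rightarrow> real \<Rightarrow> real \<Rightarrow> real" where
  "monic_quadratic_resultant p r p' r' = (r - r')^2 + (p - p')*(p*r' - p'*r)"

lemma quartic_disc_monic_quadratic_product:
  fixes p r p' r' :: real
  shows "quartic_disc 1 (p + p') (r + r' + p*p') (p*r' + p'*r) (r*r') =
    (p^2 - 4*r) * (p'^2 - 4*r') * (monic_quadratic_resultant p r p' r')^2"
  unfolding quartic_disc_def monic_quadratic_resultant_def
  by (simp only: power_one mult_1 mult_1_right) algebra

lemma monic_quadratic_resultant_zero: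
  fixes p r p' r' :: real
  assumes "monic_quadratic_resultant p r p' r' = 0" "p \<noteq> p'"
  shows "0 \<le> p^2 - 4*r" "0 \<le> p'^2 - 4*r'"
proof -
  define x where "x = (r' - r)/(p - p')"
  have x: "(p - p')*x = r' - r"
    unfolding x_def using assms(2) by simp
  have "(p - p')^2 * (x^2 + p*x + r) = ((p - p')*x)^2 + p*(p - p')*((p - p')*x) + r*(p - p')^2"
    by algebra
  also have "\<dots> = monic_quadratic_resultant p r p' r'"
    unfolding x monic_quadratic_resultant_def by algebra
  finally have root: "x^2 + p*x + r = 0"
    using assms by simp
  with x have root': "x^2 + p'*x + r' = 0"
    by (simp add: algebra_simps)
  show "0 \<le> p^2 - 4*r" "0 \<le> p'^2 - 4*r'"
    using monic_quadratic_pos[of p r x] monic_quadratic_pos[of p' r' x] root root'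
    by linarith+
qed

lemma cubic_root_above:
  fixes a0 a1 a2 a3 u :: real
  assumes "0 < a3" and "a3*u^3 + a2*u^2 + a1*u + a0 < 0"
  obtains x where "u < x" "a3*x^3 + a2*x^2 + a1*x + a0 = 0"
proof -
  define f where "f x = a3*x^3 + a2*x^2 + a1*x + a0" for x
  have poly_f: "poly [:a0, a1, a2, a3:] = f"
    unfolding f_def by (auto simp: algebra_simps power2_eq_square power3_eq_cube)
  obtain n where n: "\<forall>x\<ge>n. a3 \<le> f x"
    using poly_pinfty_gt_lc[of "[:a0, a1, a2, a3:]"] assms(1) by (auto simp: poly_f)
  define T where "T = max n (u + 1)"
  have "u < T" "0 < f T"
    using n[rule_format, of T] assms(1) unfolding T_def by auto
  moreover have "continuous_on {u..T} f"
    unfolding f_def by (intro continuous_intros)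
  ultimately obtain x where "u \<le> x" "x \<le> T" "f x = 0"
    using IVT'[of f u 0 T] assms(2) unfolding f_def by fastforce
  moreover have "x \<noteq> u"
    using assms(2) calculation(3) unfolding f_def by auto
  ultimately show ?thesis
    using that[of x] unfolding f_def by simp
qed

lemma cubic_divide_root:
  fixes a3 a2 a1 a0 z x :: "'a::comm_ring_1"
  assumes "a3*z^3 + a2*z^2 + a1*z + a0 = 0"
  shows "a3*x^3 + a2*x^2 + a1*x + a0 = (x - z) * (a3*x^2 + (a2 + a3*z)*x + (a1 + a2*z + a3*z^2))"
proof -
  have "a3*x^3 + a2*x^2 + a1*x + a0 - (a3*z^3 + a2*z^2 + a1*z + a0)
      = (x - z) * (a3*x^2 + (a2 + a3*z)*x + (a1 + a2*z + a3*z^2))"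
    by (simp add: algebra_simps power2_eq_square power3_eq_cube)
  with assms show ?thesis
    by simp
qed

lemma quadratic_eq_factored:
  fixes a b e x :: real
  assumes "a \<noteq> 0" "0 \<le> b^2 - 4*a*e"
  shows "a*x^2 + b*x + e =
    a * (x - (-b - sqrt (b^2 - 4*a*e))/(2*a)) * (x - (-b + sqrt (b^2 - 4*a*e))/(2*a))"
proof -
  have "(sqrt (b^2 - 4*a*e))^2 = b^2 - 4*a*e"
    using assms(2) by simp
  then show ?thesis
    using assms(1) by (simp add: field_simps power2_eq_square)
qed

lemma quadratic_concave_nonneg_interval:
  fixes a b e u w :: real
  assumes "a < 0" "u < w" "a*u^2 + b*u + e < 0" "0 \<le> a*w^2 + b*w + e"
  obtains s t where "u < s" "s \<le> w" "w \<le> t"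
    "\<And>x. 0 \<le> a*x^2 + b*x + e \<longleftrightarrow> s \<le> x \<and> x \<le> t"
    "\<And>x. a*x^2 + b*x + e = 0 \<longleftrightarrow> x = s \<or> x = t"
proof -
  define D where "D = b^2 - 4*a*e"
  have "4*a*(a*w^2 + b*w + e) = (2*a*w + b)^2 - D"
    unfolding D_def by (simp add: algebra_simps power2_eq_square)
  moreover have "4*a*(a*w^2 + b*w + e) \<le> 0"
    using assms(1,4) by (simp add: mult_nonpos_nonneg)
  ultimately have "0 \<le> D"
    using zero_le_power2[of "2*a*w + b"] by linarith
  define s t where "s = (-b + sqrt D)/(2*a)" and "t = (-b - sqrt D)/(2*a)"
  have factor: "a*x^2 + b*x + e = a * ((x - s) * (x - t))" for x
    using quadratic_eq_factored[of a b e x] assms(1) \<open>0 \<le> D\<close>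
    unfolding s_def t_def D_def by (simp add: ac_simps)
  have "s \<le> t"
    unfolding s_def t_def using assms(1) \<open>0 \<le> D\<close> by (simp add: divide_simps)
  then have nonneg: "0 \<le> a*x^2 + b*x + e \<longleftrightarrow> s \<le> x \<and> x \<le> t" for x
    unfolding factor using assms(1) by (auto simp: mult_le_0_iff zero_le_mult_iff)
  have zero: "a*x^2 + b*x + e = 0 \<longleftrightarrow> x = s \<or> x = t" for x
    unfolding factor using assms(1) by simp
  have w: "s \<le> w" "w \<le> t"
    using nonneg[of w] assms(4) by simp_all
  then have "u < s"
    using nonneg[of u] assms(2,3) by auto
  then show ?thesis
    using w nonneg zero by (rule that)
qed

lemma quadratic_nonconcave_factor:
  fixes a b e u w :: real
  assumes "0 \<le> a" "u < w" "a*u^2 + b*u + e < 0" "0 \<le> a*w^2 + b*w + e"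
  shows "\<exists>s g. \<forall>x\<ge>u. a*x^2 + b*x + e = g x * (x - s) \<and> 0 < g x"
proof (cases "a = 0")
  case True
  have "b * (w - u) = (a*w^2 + b*w + e) - (a*u^2 + b*u + e)"
    using True by (simp add: algebra_simps)
  then have "0 < b * (w - u)"
    using assms(3,4) by linarith
  then have "0 < b"
    using assms(2) by (simp add: zero_less_mult_iff)
  then have "\<forall>x\<ge>u. a*x^2 + b*x + e = b * (x - (-e/b)) \<and> 0 < b"
    using True by (simp add: field_simps)
  then show ?thesis
    by (intro exI[of _ "-e/b"] exI[of _ "\<lambda>_. b"]) simp
next
  case False
  with assms(1) have "0 < a"
    by simp
  define D where "D = b^2 - 4*a*e"
  have "4*a*(a*u^2 + b*u + e) = (2*a*u + b)^2 - D"
    unfolding D_def by (simp add: algebra_simps power2_eq_square)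
  moreover have "4*a*(a*u^2 + b*u + e) < 0"
    using \<open>0 < a\<close> assms(3) by (simp add: mult_pos_neg)
  ultimately have "0 \<le> D"
    using zero_le_power2[of "2*a*u + b"] by linarith
  define s t where "s = (-b + sqrt D)/(2*a)" and "t = (-b - sqrt D)/(2*a)"
  have factor: "a*x^2 + b*x + e = (a * (x - t)) * (x - s)" for x
    using quadratic_eq_factored[of a b e x] \<open>0 < a\<close> \<open>0 \<le> D\<close>
    unfolding s_def t_def D_def by (simp add: ac_simps)
  have "t \<le> s"
    unfolding s_def t_def using \<open>0 < a\<close> \<open>0 \<le> D\<close> by (simp add: divide_simps)
  have "a * ((u - t) * (u - s)) < 0"
    using assms(3) unfolding factor by (simp add: ac_simps)
  then have "(u - t) * (u - s) < 0"
    using \<open>0 < a\<close> by (simp add: mult_less_0_iff)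
  with \<open>t \<le> s\<close> have "t < u"
    by (auto simp: mult_less_0_iff)
  with factor \<open>0 < a\<close> show ?thesis
    by (intro exI[of _ s] exI[of _ "\<lambda>x. a * (x - t)"]) simp
qed

lemma quadratic_nonconcave_nonneg_ray:
  fixes a b e u w :: real
  assumes "0 \<le> a" "u < w" "a*u^2 + b*u + e < 0" "0 \<le> a*w^2 + b*w + e"
  obtains s where "u < s" "s \<le> w"
    "\<And>x. u \<le> x \<Longrightarrow> 0 \<le> a*x^2 + b*x + e \<longleftrightarrow> s \<le> x"
    "\<And>x. u \<le> x \<Longrightarrow> a*x^2 + b*x + e = 0 \<longleftrightarrow> x = s"
proof -
  obtain s g where sg: "\<And>x. u \<le> x \<Longrightarrow> a*x^2 + b*x + e = g x * (x - s) \<and> 0 < g x"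
    using quadratic_nonconcave_factor[OF assms] by blast
  have nonneg: "0 \<le> a*x^2 + b*x + e \<longleftrightarrow> s \<le> x" and zero: "a*x^2 + b*x + e = 0 \<longleftrightarrow> x = s"
    if "u \<le> x" for x
    using sg[OF that] by (auto simp: zero_le_mult_iff)
  have "u < s"
    using nonneg[of u] assms(3) by simp
  moreover have "s \<le> w"
    using nonneg[of w] assms(2,4) by simp
  ultimately show ?thesis
    using nonneg zero by (rule that)
qed

lemma less_sqrt_iff_power2_less:
  fixes d x :: real
  assumes "0 \<le> d"
  shows "d < sqrt x \<longleftrightarrow> d^2 < x"
  using assms by (metis abs_of_nonneg real_sqrt_abs real_sqrt_less_iff)

lemma le_sqrt_iff_power2_le:
  fixes d x :: real
  assumes "0 \<le> d"
  shows "d \<le> sqrt x \<longleftrightarrow> d^2 \<le> x"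
  using assms by (metis abs_of_nonneg real_sqrt_abs real_sqrt_le_iff)

lemma poly_qbeta: "poly (qbeta \<beta> c d) x = (x^2 + d*x + c)^2 + \<beta>/2 * (d*x + 2*c)"
  unfolding qbeta_def by (simp add: algebra_simps power2_eq_square power3_eq_cube)

lemma qbeta_resolvent_root:
  fixes \<beta> c d :: real
  assumes "0 < \<beta>" "0 < d"
  obtains l where "0 < l" "(2*l*d - \<beta>*d/2)^2 = 8*l*(l^2 + 2*l*c - \<beta>*c)"
proof -
  have "-(d^2*\<beta>^2/4) < 0"
    using assms by simp
  then obtain l where "0 < l"
    and "8*l^3 + (16*c - 4*d^2)*l^2 + (2*\<beta>*d^2 - 8*\<beta>*c)*l - d^2*\<beta>^2/4 = 0"
    using cubic_root_above[of 8 0 "16*c - 4*d^2" "2*\<beta>*d^2 - 8*\<beta>*c" "-(d^2*\<beta>^2/4)"] by auto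
  then have "(2*l*d - \<beta>*d/2)^2 = 8*l*(l^2 + 2*l*c - \<beta>*c)"
    by (simp add: algebra_simps power2_eq_square power3_eq_cube)
  with \<open>0 < l\<close> show ?thesis
    by (rule that)
qed

text \<open>Ferrari's method: for a root l of the resolvent and k = (2 l d - beta d/2) / (4 l),
  poly (qbeta beta c d) x = (x^2 + d x + c + l)^2 - 2 l (x + k)^2.\<close>
lemma qbeta_ferrari_coefficients:
  fixes \<beta> c d :: real
  assumes "0 < \<beta>" "0 < d"
  obtains p r p' r' where "p \<noteq> p'" "p + p' = 2*d" "r + r' + p*p' = 2*c + d^2"
    "p*r' + p'*r = d*(\<beta>/2 + 2*c)" "r*r' = c*(\<beta> + c)"
proof -
  obtain l where "0 < l" and resolvent: "(2*l*d - \<beta>*d/2)^2 = 8*l*(l^2 + 2*l*c - \<beta>*c)"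
    using qbeta_resolvent_root[OF assms] by blast
  define \<sigma> where "\<sigma> = sqrt (2*l)"
  define k where "k = (2*l*d - \<beta>*d/2)/(4*l)"
  define p p' r r' where "p = d - \<sigma>" and "p' = d + \<sigma>" and "r = c + l - \<sigma>*k" and "r' = c + l + \<sigma>*k"
  have \<sigma>: "0 < \<sigma>" "\<sigma>^2 = 2*l"
    unfolding \<sigma>_def using \<open>0 < l\<close> by simp_all
  have k: "2*l*k^2 = 2*l*c + l^2 - \<beta>*c"
  proof -
    have "2*l*k^2 = (2*l*d - \<beta>*d/2)^2/(8*l)"
      unfolding k_def using \<open>0 < l\<close> by (simp add: field_simps power2_eq_square)
    also have "\<dots> = l^2 + 2*l*c - \<beta>*c"
      unfolding resolvent using \<open>0 < l\<close> by simp
    finally show ?thesis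
      by simp
  qed
  have "p \<noteq> p'" "p + p' = 2*d"
    unfolding p_def p'_def using \<sigma> by simp_all
  moreover have "r + r' + p*p' = 2*c + d^2"
    unfolding p_def p'_def r_def r'_def using \<sigma> by (simp add: algebra_simps power2_eq_square)
  moreover have "p*r' + p'*r = d*(\<beta>/2 + 2*c)"
  proof -
    have "p*r' + p'*r = 2*d*(c + l) - 2*\<sigma>^2*k"
      unfolding p_def p'_def r_def r'_def by (simp add: algebra_simps power2_eq_square)
    also have "\<dots> = d*(\<beta>/2 + 2*c)"
      unfolding \<sigma> k_def using \<open>0 < l\<close> by (simp add: field_simps)
    finally show ?thesis .
  qed
  moreover have "r*r' = c*(\<beta> + c)"
  proof -
    have "r*r' = (c + l)^2 - \<sigma>^2*k^2"
      unfolding r_def r'_def by (simp add: algebra_simps power2_eq_square)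
    also have "\<dots> = c*(\<beta> + c)"
      using k unfolding \<sigma> by (simp add: algebra_simps power2_eq_square)
    finally show ?thesis .
  qed
  ultimately show ?thesis
    by (rule that)
qed

lemma qbeta_ferrari_factors:
  fixes \<beta> c d :: real
  assumes "0 < \<beta>" "0 < d"
  obtains D D' R where "disc_qbeta \<beta> c d = D * D' * R^2"
    "num_real_roots (qbeta \<beta> c d) = (if 0 \<le> D then 2 else 0) + (if 0 \<le> D' then 2 else 0)"
    "R = 0 \<Longrightarrow> 0 \<le> D \<and> 0 \<le> D'"
    "0 \<le> D \<Longrightarrow> 0 \<le> D' \<Longrightarrow> 4*c \<le> d^2"
    "\<And>x. poly (qbeta \<beta> c d) x \<le> 0 \<Longrightarrow> 0 \<le> D \<or> 0 \<le> D'"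
    "\<And>x. poly (qbeta \<beta> c d) x < 0 \<Longrightarrow> 0 < D \<or> 0 < D'"
proof -
  obtain p r p' r' where "p \<noteq> p'" and sum: "p + p' = 2*d"
    and coeff2: "r + r' + p*p' = 2*c + d^2"
    and coeff1: "p*r' + p'*r = d*(\<beta>/2 + 2*c)" and coeff0: "r*r' = c*(\<beta> + c)"
    using qbeta_ferrari_coefficients[OF assms] .
  have "[:r, p, 1:] * [:r', p', 1:] = [:r*r', p*r' + p'*r, r + r' + p*p', p + p', 1:]"
    by (simp add: algebra_simps)
  then have q: "qbeta \<beta> c d = [:r, p, 1:] * [:r', p', 1:]"
    unfolding qbeta_def sum coeff2 coeff1 coeff0 by (simp add: mult.commute)
  define D D' R where "D = p^2 - 4*r" and "D' = p'^2 - 4*r'"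
    and "R = monic_quadratic_resultant p r p' r'"
  have "disc_qbeta \<beta> c d = D * D' * R^2"
    unfolding disc_qbeta_def D_def D'_def R_def quartic_disc_monic_quadratic_product[symmetric]
      sum coeff2 coeff1 coeff0 ..
  moreover have "num_real_roots (qbeta \<beta> c d) = (if 0 \<le> D then 2 else 0) + (if 0 \<le> D' then 2 else 0)"
    unfolding q D_def D'_def by (rule num_real_roots_monic_quadratic_product)
  moreover have "0 \<le> D \<and> 0 \<le> D'" if "R = 0"
    using monic_quadratic_resultant_zero[OF _ \<open>p \<noteq> p'\<close>] that unfolding D_def D'_def R_def by blast
  moreover have "4*c \<le> d^2" if "0 \<le> D" "0 \<le> D'"
  proof -
    \<comment> \<open>D + D' = 2 p p' - 8 c, and p p' \<le> ((p + p')/2)^2 = d^2\<close>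
    have "4*d^2 = p^2 + 2*(p*p') + p'^2"
      using power2_sum[of p p'] unfolding sum by (simp add: power_mult_distrib)
    moreover have "0 \<le> p^2 - 2*(p*p') + p'^2"
      using zero_le_power2[of "p - p'"] by (simp add: power2_eq_square algebra_simps)
    ultimately show ?thesis
      using that coeff2 unfolding D_def D'_def by linarith
  qed
  moreover note monic_quadratic_product_nonpos_imp_disc_nonneg[of r p r' p', folded q D_def D'_def]
  moreover note monic_quadratic_product_neg_imp_disc_pos[of r p r' p', folded q D_def D'_def]
  ultimately show ?thesis
    by (rule that)
qed

definition disc_qbeta_cubic :: "real \<Rightarrow> real \<Rightarrow> real \<Rightarrow> real" where
  "disc_qbeta_cubic \<beta> c x = (\<beta>/2 - 4*c)*x^3 + (48*c^2 + 12*c*\<beta> - 27*\<beta>^2/16)*x^2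
     - (192*c^3 + 120*c^2*\<beta>)*x + 256*c^3*(c + \<beta>)"

lemma disc_qbeta_eq_cubic: "disc_qbeta \<beta> c d = \<beta>^2 * disc_qbeta_cubic \<beta> c (d^2)"
  unfolding disc_qbeta_def quartic_disc_def disc_qbeta_cubic_def
  by (simp only: power_one mult_1 mult_1_right) (simp add: field_simps, algebra)

lemma disc_qbeta_cubic_at_4c: "disc_qbeta_cubic \<beta> c (4*c) = -27*\<beta>^2*c^2"
  unfolding disc_qbeta_cubic_def by (simp add: algebra_simps power2_eq_square power3_eq_cube)

lemma disc_qbeta_cubic_at_4beta: "disc_qbeta_cubic \<beta> c (4*\<beta>) = (\<beta> - 4*c)^3 * (5*\<beta> - 4*c)"
  unfolding disc_qbeta_cubic_def by (simp add: algebra_simps power2_eq_square power3_eq_cube)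

lemma qbeta_nonpos_value:
  fixes \<beta> c d :: real
  assumes "0 < \<beta>" "0 \<le> d" "4*c \<le> d^2"
  obtains x where "poly (qbeta \<beta> c d) x \<le> 0" "4*c < d^2 \<Longrightarrow> poly (qbeta \<beta> c d) x < 0"
proof -
  define s where "s = sqrt (d^2 - 4*c)"
  define x where "x = (-d - s)/2"
  have s: "0 \<le> s" "s^2 = d^2 - 4*c"
    unfolding s_def using assms(3) by simp_all
  have "x^2 + d*x + c = 0"
    unfolding x_def using s by (simp add: field_simps power2_eq_square)
  moreover have "d*x + 2*c = (4*c - d^2 - d * s)/2"
    unfolding x_def by (simp add: field_simps power2_eq_square)
  ultimately have poly_at_x: "poly (qbeta \<beta> c d) x = \<beta>/4 * (4*c - d^2 - d * s)"
    unfolding poly_qbeta by simp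
  have "0 \<le> d * s"
    using assms(2) s(1) by simp
  then have "poly (qbeta \<beta> c d) x \<le> 0" "4*c < d^2 \<Longrightarrow> poly (qbeta \<beta> c d) x < 0"
    unfolding poly_at_x using assms(1,3) by (simp_all add: mult_nonneg_nonpos mult_pos_neg)
  then show ?thesis
    by (rule that)
qed

lemma num_real_roots_qbeta:
  fixes \<beta> c d :: real
  assumes "0 < \<beta>" "0 < d"
  shows "num_real_roots (qbeta \<beta> c d) =
    (if d^2 < 4*c then (if 0 < disc_qbeta \<beta> c d then 0 else 2)
     else (if 0 \<le> disc_qbeta \<beta> c d then 4 else 2))"
proof -
  obtain D D' R where disc: "disc_qbeta \<beta> c d = D * D' * R^2"
    and count: "num_real_roots (qbeta \<beta> c d) = (if 0 \<le> D then 2 else 0) + (if 0 \<le> D' then 2 else 0)"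
    and R: "R = 0 \<Longrightarrow> 0 \<le> D \<and> 0 \<le> D'"
    and real_roots: "0 \<le> D \<Longrightarrow> 0 \<le> D' \<Longrightarrow> 4*c \<le> d^2"
    and nonpos: "\<And>x. poly (qbeta \<beta> c d) x \<le> 0 \<Longrightarrow> 0 \<le> D \<or> 0 \<le> D'"
    and neg: "\<And>x. poly (qbeta \<beta> c d) x < 0 \<Longrightarrow> 0 < D \<or> 0 < D'"
    by (rule qbeta_ferrari_factors[OF assms, of c]) (rule that)
  show ?thesis
  proof (cases "d^2 < 4*c")
    case True
    with real_roots have "\<not> (0 \<le> D \<and> 0 \<le> D')"
      by auto
    with R have "0 < disc_qbeta \<beta> c d \<longleftrightarrow> D < 0 \<and> D' < 0"
      unfolding disc by (auto simp: zero_less_mult_iff)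
    with True \<open>\<not> (0 \<le> D \<and> 0 \<le> D')\<close> show ?thesis
      unfolding count by auto
  next
    case False
    then obtain x where x: "poly (qbeta \<beta> c d) x \<le> 0" "4*c < d^2 \<Longrightarrow> poly (qbeta \<beta> c d) x < 0"
      using qbeta_nonpos_value[of \<beta> d c] assms by auto
    with nonpos have "0 \<le> D \<or> 0 \<le> D'"
      by blast
    have "disc_qbeta \<beta> c d < 0" if "\<not> (0 \<le> D \<and> 0 \<le> D')"
    proof (cases "d^2 = 4*c")
      case True
      moreover have "0 < d^2"
        using assms(2) by simp
      ultimately show ?thesis
        unfolding disc_qbeta_eq_cubic using assms(1) by (simp add: disc_qbeta_cubic_at_4c)
    next
      case False
      with \<open>\<not> d^2 < 4*c\<close> x(2) neg have "0 < D \<or> 0 < D'"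
        by fastforce
      with that \<open>0 \<le> D \<or> 0 \<le> D'\<close> R show ?thesis
        unfolding disc by (auto simp: mult_less_0_iff)
    qed
    then have "0 \<le> disc_qbeta \<beta> c d \<longleftrightarrow> 0 \<le> D \<and> 0 \<le> D'"
      unfolding disc by force
    with False \<open>0 \<le> D \<or> 0 \<le> D'\<close> show ?thesis
      unfolding count by auto
  qed
qed

lemma disc_qbeta_cubic_deriv:
  "(disc_qbeta_cubic \<beta> c has_real_derivative
     -27*x*\<beta>^2/8 - \<beta>*(4*c - x)*(3*x/2 + 30*c) - 12*c*(4*c - x)^2) (at x)"
proof -
  have "(disc_qbeta_cubic \<beta> c has_real_derivative
      3*(\<beta>/2 - 4*c)*x^2 + 2*(48*c^2 + 12*c*\<beta> - 27*\<beta>^2/16)*x - (192*c^3 + 120*c^2*\<beta>)) (at x)"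
    unfolding disc_qbeta_cubic_def[abs_def]
    by (auto intro!: derivative_eq_intros simp: algebra_simps power2_eq_square)
  then show ?thesis
    by (simp add: algebra_simps power2_eq_square power3_eq_cube)
qed

lemma disc_qbeta_cubic_strict_antimono:
  fixes \<beta> c x y :: real
  assumes "0 < c" "0 < \<beta>" "0 \<le> x" "x < y" "y \<le> 4*c"
  shows "disc_qbeta_cubic \<beta> c y < disc_qbeta_cubic \<beta> c x"
proof (rule DERIV_neg_imp_decreasing[OF \<open>x < y\<close>])
  fix z :: real
  assume z: "x \<le> z" "z \<le> y"
  have "0 \<le> 27*z*\<beta>^2/8" "0 \<le> \<beta>*(4*c - z)*(3*z/2 + 30*c)" "0 \<le> 12*c*(4*c - z)^2"
    using assms z by simp_all
  moreover have "0 < 27*z*\<beta>^2/8 \<or> 0 < 12*c*(4*c - z)^2"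
    using assms z by (cases "z = 0") simp_all
  ultimately have "-27*z*\<beta>^2/8 - \<beta>*(4*c - z)*(3*z/2 + 30*c) - 12*c*(4*c - z)^2 < 0"
    by linarith
  then show "\<exists>D. (disc_qbeta_cubic \<beta> c has_real_derivative D) (at z) \<and> D < 0"
    using disc_qbeta_cubic_deriv by blast
qed

lemma disc_qbeta_cubic_first_root:
  fixes \<beta> c :: real
  assumes "0 < c" "0 < \<beta>"
  obtains x1 where "0 < x1" "x1 < 4*c"
    "\<And>x. 0 \<le> x \<Longrightarrow> x \<le> 4*c \<Longrightarrow> 0 < disc_qbeta_cubic \<beta> c x \<longleftrightarrow> x < x1"
    "\<And>x. 0 \<le> x \<Longrightarrow> x \<le> 4*c \<Longrightarrow> disc_qbeta_cubic \<beta> c x = 0 \<longleftrightarrow> x = x1"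
proof -
  have "disc_qbeta_cubic \<beta> c (4*c) < 0"
    using assms by (simp add: disc_qbeta_cubic_at_4c)
  moreover have "0 < disc_qbeta_cubic \<beta> c 0"
    using assms by (simp add: disc_qbeta_cubic_def)
  moreover have "continuous_on {0..4*c} (disc_qbeta_cubic \<beta> c)"
    unfolding disc_qbeta_cubic_def by (intro continuous_intros)
  ultimately obtain x1 where x1: "0 \<le> x1" "x1 \<le> 4*c" "disc_qbeta_cubic \<beta> c x1 = 0"
    using IVT2'[of "disc_qbeta_cubic \<beta> c" "4*c" 0 0] assms(1) by force
  then have "x1 \<noteq> 0" "x1 \<noteq> 4*c"
    using \<open>0 < disc_qbeta_cubic \<beta> c 0\<close> \<open>disc_qbeta_cubic \<beta> c (4*c) < 0\<close> by auto
  have sign: "0 < disc_qbeta_cubic \<beta> c x \<longleftrightarrow> x < x1" and zero: "disc_qbeta_cubic \<beta> c x = 0 \<longleftrightarrow> x = x1"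
    if "0 \<le> x" "x \<le> 4*c" for x
    using disc_qbeta_cubic_strict_antimono[OF assms, of x x1] disc_qbeta_cubic_strict_antimono[OF assms, of x1 x]
      x1 that by (cases x x1 rule: linorder_cases; simp)+
  have "0 < x1" "x1 < 4*c"
    using x1 \<open>x1 \<noteq> 0\<close> \<open>x1 \<noteq> 4*c\<close> by simp_all
  then show ?thesis
    using sign zero by (rule that)
qed

lemma disc_qbeta_cubic_neg_small_beta:
  fixes \<beta> c x :: real
  assumes "0 < c" "0 < \<beta>" "\<beta> < 4*c" "4*c \<le> x"
  shows "disc_qbeta_cubic \<beta> c x < 0"
proof -
  define B where "B = (x - 4*c)^2 * (x/2 + 16*c)"
  \<comment> \<open>completing the square, viewing the cubic as a quadratic polynomial in beta\<close>
  have identity: "27*x^2/4 * disc_qbeta_cubic \<beta> c x = ((x - 4*c)*(x - 16*c))^3/4 - (B - 27*x^2*\<beta>/8)^2"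
    unfolding disc_qbeta_cubic_def B_def by (simp add: field_simps power2_eq_square power3_eq_cube)
  consider "x = 4*c" | "4*c < x" "x < 16*c" | "16*c \<le> x"
    using assms(4) by linarith
  then have "((x - 4*c)*(x - 16*c))^3/4 < (B - 27*x^2*\<beta>/8)^2"
  proof cases
    case 1
    then show ?thesis
      unfolding B_def using assms by simp
  next
    case 2
    then have "((x - 4*c)*(x - 16*c))^3 < 0"
      by (simp add: mult_pos_neg odd_pos)
    then show ?thesis
      using zero_le_power2[of "B - 27*x^2*\<beta>/8"] by linarith
  next
    case 3
    define v where "v = (x - 16*c)*(x^2 + 13*c*x - 32*c^2)/2"
    have "256*c^2 \<le> x^2"
      using power_mono[of "16*c" x 2] 3 assms(1) by (simp add: power_mult_distrib)
    moreover have "0 \<le> 13*c*x"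
      using 3 assms(1) by simp
    ultimately have "0 \<le> x^2 + 13*c*x - 32*c^2"
      using zero_le_power2[of c] by linarith
    then have "0 \<le> v"
      unfolding v_def using 3 by simp
    moreover have "v < B - 27*x^2*\<beta>/8"
      unfolding v_def B_def using assms 3 by (simp add: field_simps power2_eq_square)
    ultimately have "v^2 < (B - 27*x^2*\<beta>/8)^2"
      by (simp add: power_strict_mono)
    moreover have "v^2 = ((x - 4*c)*(x - 16*c))^3/4 + (x - 16*c)^2*(27*c*x^2*(2*x - 5*c))/4"
      unfolding v_def by (simp add: field_simps power2_eq_square power3_eq_cube)
    moreover have "0 \<le> (x - 16*c)^2*(27*c*x^2*(2*x - 5*c))"
      using 3 assms(1) by simp
    ultimately show ?thesis
      by linarith
  qed
  then have "27*x^2/4 * disc_qbeta_cubic \<beta> c x < 0"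
    unfolding identity by linarith
  moreover have "0 < 27*x^2/4"
    using assms by simp
  ultimately show ?thesis
    by (simp add: mult_less_0_iff)
qed

lemma disc_qbeta_cubic_quotient:
  fixes \<beta> c :: real
  assumes "0 < c" "4*c \<le> \<beta>"
  obtains x1 b e where "x1 < 4*c"
    "\<And>x. disc_qbeta_cubic \<beta> c x = (x - x1) * ((\<beta>/2 - 4*c)*x^2 + b*x + e)"
    "(\<beta>/2 - 4*c)*(4*c)^2 + b*(4*c) + e < 0" "0 \<le> (\<beta>/2 - 4*c)*(4*\<beta>)^2 + b*(4*\<beta>) + e"
proof -
  have "0 < \<beta>"
    using assms by simp
  obtain x1 where "0 < x1" "x1 < 4*c"
    and "\<And>x. 0 \<le> x \<Longrightarrow> x \<le> 4*c \<Longrightarrow> 0 < disc_qbeta_cubic \<beta> c x \<longleftrightarrow> x < x1"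
    and zero: "\<And>x. 0 \<le> x \<Longrightarrow> x \<le> 4*c \<Longrightarrow> disc_qbeta_cubic \<beta> c x = 0 \<longleftrightarrow> x = x1"
    using disc_qbeta_cubic_first_root[OF assms(1) \<open>0 < \<beta>\<close>] by blast
  define a2 a1 a0 where "a2 = 48*c^2 + 12*c*\<beta> - 27*\<beta>^2/16"
    and "a1 = -(192*c^3 + 120*c^2*\<beta>)" and "a0 = 256*c^3*(c + \<beta>)"
  have cubic: "disc_qbeta_cubic \<beta> c x = (\<beta>/2 - 4*c)*x^3 + a2*x^2 + a1*x + a0" for x
    unfolding disc_qbeta_cubic_def a2_def a1_def a0_def by (simp add: algebra_simps)
  define b e where "b = a2 + (\<beta>/2 - 4*c)*x1" and "e = a1 + a2*x1 + (\<beta>/2 - 4*c)*x1^2"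
  define R where "R x = (\<beta>/2 - 4*c)*x^2 + b*x + e" for x
  have factor: "disc_qbeta_cubic \<beta> c x = (x - x1) * R x" for x
    using cubic_divide_root[of "\<beta>/2 - 4*c" x1 a2 a1 a0 x] zero[of x1] \<open>0 < x1\<close> \<open>x1 < 4*c\<close>
    unfolding cubic R_def b_def e_def by simp
  have "(4*c - x1) * R (4*c) < 0"
    unfolding factor[symmetric] disc_qbeta_cubic_at_4c using assms \<open>0 < \<beta>\<close> by simp
  then have "R (4*c) < 0"
    using \<open>x1 < 4*c\<close> by (simp add: mult_less_0_iff)
  have "0 \<le> (4*\<beta> - x1) * R (4*\<beta>)"
    unfolding factor[symmetric] disc_qbeta_cubic_at_4beta using assms by simp
  then have "0 \<le> R (4*\<beta>)"
    using \<open>x1 < 4*c\<close> assms by (simp add: zero_le_mult_iff)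
  show ?thesis
    using that[of x1 b e] \<open>x1 < 4*c\<close> factor \<open>R (4*c) < 0\<close> \<open>0 \<le> R (4*\<beta>)\<close>
    unfolding R_def by blast
qed

lemma disc_qbeta_cubic_medium_beta:
  fixes \<beta> c :: real
  assumes "0 < c" "4*c \<le> \<beta>" "\<beta> < 8*c"
  obtains x2 x3 where "4*c < x2" "x2 \<le> 4*\<beta>" "4*\<beta> \<le> x3"
    "{x. 4*c \<le> x \<and> 0 \<le> disc_qbeta_cubic \<beta> c x} = {x2..x3}"
    "{x. 4*c \<le> x \<and> disc_qbeta_cubic \<beta> c x = 0} = {x2, x3}"
proof -
  obtain x1 b e where "x1 < 4*c"
    and factor: "\<And>x. disc_qbeta_cubic \<beta> c x = (x - x1) * ((\<beta>/2 - 4*c)*x^2 + b*x + e)"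
    and at_4c: "(\<beta>/2 - 4*c)*(4*c)^2 + b*(4*c) + e < 0"
    and at_4beta: "0 \<le> (\<beta>/2 - 4*c)*(4*\<beta>)^2 + b*(4*\<beta>) + e"
    using disc_qbeta_cubic_quotient[OF assms(1,2)] by blast
  have "\<beta>/2 - 4*c < 0" "4*c < 4*\<beta>"
    using assms by simp_all
  then obtain x2 x3 where x23: "4*c < x2" "x2 \<le> 4*\<beta>" "4*\<beta> \<le> x3"
    and nonneg: "\<And>x. 0 \<le> (\<beta>/2 - 4*c)*x^2 + b*x + e \<longleftrightarrow> x2 \<le> x \<and> x \<le> x3"
    and zero: "\<And>x. (\<beta>/2 - 4*c)*x^2 + b*x + e = 0 \<longleftrightarrow> x = x2 \<or> x = x3"
    using quadratic_concave_nonneg_interval[OF _ _ at_4c at_4beta] by blast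
  have "0 \<le> disc_qbeta_cubic \<beta> c x \<longleftrightarrow> x2 \<le> x \<and> x \<le> x3"
    and "disc_qbeta_cubic \<beta> c x = 0 \<longleftrightarrow> x = x2 \<or> x = x3" if "4*c \<le> x" for x
    using that \<open>x1 < 4*c\<close> nonneg[of x] zero[of x] unfolding factor by (simp_all add: zero_le_mult_iff)
  with x23 show ?thesis
    using that[of x2 x3] by fastforce
qed

lemma disc_qbeta_cubic_large_beta:
  fixes \<beta> c :: real
  assumes "0 < c" "8*c \<le> \<beta>"
  obtains x2 where "4*c < x2" "x2 \<le> 4*\<beta>"
    "{x. 4*c \<le> x \<and> 0 \<le> disc_qbeta_cubic \<beta> c x} = {x2..}"
    "{x. 4*c \<le> x \<and> disc_qbeta_cubic \<beta> c x = 0} = {x2}"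
proof -
  have "4*c \<le> \<beta>"
    using assms by simp
  obtain x1 b e where "x1 < 4*c"
    and factor: "\<And>x. disc_qbeta_cubic \<beta> c x = (x - x1) * ((\<beta>/2 - 4*c)*x^2 + b*x + e)"
    and at_4c: "(\<beta>/2 - 4*c)*(4*c)^2 + b*(4*c) + e < 0"
    and at_4beta: "0 \<le> (\<beta>/2 - 4*c)*(4*\<beta>)^2 + b*(4*\<beta>) + e"
    using disc_qbeta_cubic_quotient[OF assms(1) \<open>4*c \<le> \<beta>\<close>] by blast
  have "0 \<le> \<beta>/2 - 4*c" "4*c < 4*\<beta>"
    using assms by simp_all
  then obtain x2 where x2: "4*c < x2" "x2 \<le> 4*\<beta>"
    and nonneg: "\<And>x. 4*c \<le> x \<Longrightarrow> 0 \<le> (\<beta>/2 - 4*c)*x^2 + b*x + e \<longleftrightarrow> x2 \<le> x"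
    and zero: "\<And>x. 4*c \<le> x \<Longrightarrow> (\<beta>/2 - 4*c)*x^2 + b*x + e = 0 \<longleftrightarrow> x = x2"
    using quadratic_nonconcave_nonneg_ray[OF _ _ at_4c at_4beta] by blast
  have "0 \<le> disc_qbeta_cubic \<beta> c x \<longleftrightarrow> x2 \<le> x" and "disc_qbeta_cubic \<beta> c x = 0 \<longleftrightarrow> x = x2"
    if "4*c \<le> x" for x
    using that \<open>x1 < 4*c\<close> nonneg[OF that] zero[OF that] unfolding factor
    by (simp_all add: zero_le_mult_iff)
  with x2 show ?thesis
    using that[of x2] by fastforce
qed

lemma disc_qbeta_nonneg_zeros:
  fixes \<beta> c :: real
  assumes "\<beta> \<noteq> 0"
  shows "{d. 0 \<le> d \<and> disc_qbeta \<beta> c d = 0} = sqrt ` {x. 0 \<le> x \<and> disc_qbeta_cubic \<beta> c x = 0}"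
proof (intro set_eqI iffI)
  fix d
  assume "d \<in> {d. 0 \<le> d \<and> disc_qbeta \<beta> c d = 0}"
  then show "d \<in> sqrt ` {x. 0 \<le> x \<and> disc_qbeta_cubic \<beta> c x = 0}"
    using assms by (intro image_eqI[of _ _ "d^2"]) (auto simp: disc_qbeta_eq_cubic)
qed (use assms in \<open>auto simp: disc_qbeta_eq_cubic\<close>)

lemma qbeta_root_thresholds_pos_c:
  fixes \<beta> c :: real and I Z :: "real set"
  assumes "0 < \<beta>" "0 < c"
    and I: "{x. 4*c \<le> x \<and> 0 \<le> disc_qbeta_cubic \<beta> c x} = I"
    and Z: "{x. 4*c \<le> x \<and> disc_qbeta_cubic \<beta> c x = 0} = Z"
  obtains x1 where "0 < x1" "x1 < 4*c" "{d. 0 \<le> d \<and> disc_qbeta \<beta> c d = 0} = sqrt ` insert x1 Z"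
    "\<And>d. 0 < d \<Longrightarrow>
      num_real_roots (qbeta \<beta> c d) = (if d < sqrt x1 then 0 else if d^2 \<in> I then 4 else 2)"
proof -
  obtain x1 where x1: "0 < x1" "x1 < 4*c"
    and sign: "\<And>x. 0 \<le> x \<Longrightarrow> x \<le> 4*c \<Longrightarrow> 0 < disc_qbeta_cubic \<beta> c x \<longleftrightarrow> x < x1"
    and zero: "\<And>x. 0 \<le> x \<Longrightarrow> x \<le> 4*c \<Longrightarrow> disc_qbeta_cubic \<beta> c x = 0 \<longleftrightarrow> x = x1"
    using disc_qbeta_cubic_first_root[OF assms(2,1)] by blast
  have "{x. 0 \<le> x \<and> disc_qbeta_cubic \<beta> c x = 0} = insert x1 Z"
    unfolding Z[symmetric] using zero x1 assms(2) by (force simp: not_le)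
  then have zeros: "{d. 0 \<le> d \<and> disc_qbeta \<beta> c d = 0} = sqrt ` insert x1 Z"
    using disc_qbeta_nonneg_zeros assms(1) by simp
  have "num_real_roots (qbeta \<beta> c d) = (if d < sqrt x1 then 0 else if d^2 \<in> I then 4 else 2)"
    if "0 < d" for d
  proof -
    have "0 < \<beta>^2"
      using assms(1) by simp
    then have count: "num_real_roots (qbeta \<beta> c d) =
        (if d^2 < 4*c then (if 0 < disc_qbeta_cubic \<beta> c (d^2) then 0 else 2)
         else (if 0 \<le> disc_qbeta_cubic \<beta> c (d^2) then 4 else 2))"
      using num_real_roots_qbeta[of \<beta> d c] assms(1) that
      by (simp add: disc_qbeta_eq_cubic zero_less_mult_iff zero_le_mult_iff)
    have "d < sqrt x1 \<longleftrightarrow> d^2 < x1"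
      using less_sqrt_iff_power2_less that by simp
    then show ?thesis
      unfolding count I[symmetric] using sign[of "d^2"] x1 by auto
  qed
  with x1 zeros show ?thesis
    by (rule that)
qed

lemma qbeta_root_thresholds_small_beta:
  fixes \<beta> c :: real
  assumes "0 < c" "0 < \<beta>" "\<beta> < 4*c"
  obtains d1 where "0 < d1" "d1 < 2 * sqrt c" "{d. 0 \<le> d \<and> disc_qbeta \<beta> c d = 0} = {d1}"
    "\<And>d. 0 < d \<Longrightarrow> num_real_roots (qbeta \<beta> c d) = (if d < d1 then 0 else 2)"
proof -
  have "{x. 4*c \<le> x \<and> 0 \<le> disc_qbeta_cubic \<beta> c x} = {}" "{x. 4*c \<le> x \<and> disc_qbeta_cubic \<beta> c x = 0} = {}"
    using disc_qbeta_cubic_neg_small_beta[OF assms] by force+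
  then obtain x1 where x1: "0 < x1" "x1 < 4*c"
    and zeros: "{d. 0 \<le> d \<and> disc_qbeta \<beta> c d = 0} = sqrt ` insert x1 {}"
    and count: "\<And>d. 0 < d \<Longrightarrow> num_real_roots (qbeta \<beta> c d) =
      (if d < sqrt x1 then 0 else if d^2 \<in> {} then 4 else 2)"
    using qbeta_root_thresholds_pos_c[OF assms(2,1)] by blast
  show ?thesis
  proof (rule that)
    show "0 < sqrt x1" "sqrt x1 < 2 * sqrt c"
      using x1 real_sqrt_less_iff[of x1 "4*c"] by (simp_all add: real_sqrt_mult)
  qed (use zeros count in simp_all)
qed

lemma qbeta_root_thresholds_medium_beta:
  fixes \<beta> c :: real
  assumes "0 < c" "4*c \<le> \<beta>" "\<beta> < 8*c"
  obtains d1 d2 d3 where "0 < d1" "d1 < 2 * sqrt c" "2 * sqrt c < d2" "d2 \<le> 2 * sqrt \<beta>"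
    "2 * sqrt \<beta> \<le> d3" "{d. 0 \<le> d \<and> disc_qbeta \<beta> c d = 0} = {d1, d2, d3}"
    "\<And>d. 0 < d \<Longrightarrow>
      num_real_roots (qbeta \<beta> c d) = (if d < d1 then 0 else if d2 \<le> d \<and> d \<le> d3 then 4 else 2)"
proof -
  have "0 < \<beta>"
    using assms(1,2) by simp
  obtain x2 x3 where x23: "4*c < x2" "x2 \<le> 4*\<beta>" "4*\<beta> \<le> x3"
    and "{x. 4*c \<le> x \<and> 0 \<le> disc_qbeta_cubic \<beta> c x} = {x2..x3}"
    and "{x. 4*c \<le> x \<and> disc_qbeta_cubic \<beta> c x = 0} = {x2, x3}"
    using disc_qbeta_cubic_medium_beta[OF assms] by blast
  then obtain x1 where x1: "0 < x1" "x1 < 4*c"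
    and zeros: "{d. 0 \<le> d \<and> disc_qbeta \<beta> c d = 0} = sqrt ` insert x1 {x2, x3}"
    and count: "\<And>d. 0 < d \<Longrightarrow> num_real_roots (qbeta \<beta> c d) =
      (if d < sqrt x1 then 0 else if d^2 \<in> {x2..x3} then 4 else 2)"
    using qbeta_root_thresholds_pos_c[OF \<open>0 < \<beta>\<close> assms(1)] by blast
  show ?thesis
  proof (rule that)
    show "0 < sqrt x1" "sqrt x1 < 2 * sqrt c" "2 * sqrt c < sqrt x2" "sqrt x2 \<le> 2 * sqrt \<beta>"
      "2 * sqrt \<beta> \<le> sqrt x3"
      using x1 x23 real_sqrt_less_iff[of x1 "4*c"] real_sqrt_less_iff[of "4*c" x2]
        real_sqrt_le_iff[of x2 "4*\<beta>"] real_sqrt_le_iff[of "4*\<beta>" x3]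
      by (simp_all add: real_sqrt_mult)
    show "num_real_roots (qbeta \<beta> c d) =
        (if d < sqrt x1 then 0 else if sqrt x2 \<le> d \<and> d \<le> sqrt x3 then 4 else 2)" if "0 < d" for d
      using count[OF that] less_sqrt_iff_power2_less[of d x2] le_sqrt_iff_power2_le[of d x3] that
      by auto
  qed (use zeros in simp)
qed

lemma qbeta_root_thresholds_large_beta:
  fixes \<beta> c :: real
  assumes "0 < c" "8*c \<le> \<beta>"
  obtains d1 d2 where "0 < d1" "d1 < 2 * sqrt c" "2 * sqrt c < d2" "d2 \<le> 2 * sqrt \<beta>"
    "{d. 0 \<le> d \<and> disc_qbeta \<beta> c d = 0} = {d1, d2}"
    "\<And>d. 0 < d \<Longrightarrow>
      num_real_roots (qbeta \<beta> c d) = (if d < d1 then 0 else if d2 \<le> d then 4 else 2)"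
proof -
  have "0 < \<beta>"
    using assms by simp
  obtain x2 where x2: "4*c < x2" "x2 \<le> 4*\<beta>"
    and "{x. 4*c \<le> x \<and> 0 \<le> disc_qbeta_cubic \<beta> c x} = {x2..}"
    and "{x. 4*c \<le> x \<and> disc_qbeta_cubic \<beta> c x = 0} = {x2}"
    using disc_qbeta_cubic_large_beta[OF assms] by blast
  then obtain x1 where x1: "0 < x1" "x1 < 4*c"
    and zeros: "{d. 0 \<le> d \<and> disc_qbeta \<beta> c d = 0} = sqrt ` insert x1 {x2}"
    and count: "\<And>d. 0 < d \<Longrightarrow> num_real_roots (qbeta \<beta> c d) =
      (if d < sqrt x1 then 0 else if d^2 \<in> {x2..} then 4 else 2)"
    using qbeta_root_thresholds_pos_c[OF \<open>0 < \<beta>\<close> assms(1)] by blast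
  show ?thesis
  proof (rule that)
    show "0 < sqrt x1" "sqrt x1 < 2 * sqrt c" "2 * sqrt c < sqrt x2" "sqrt x2 \<le> 2 * sqrt \<beta>"
      using x1 x2 real_sqrt_less_iff[of x1 "4*c"] real_sqrt_less_iff[of "4*c" x2]
        real_sqrt_le_iff[of x2 "4*\<beta>"]
      by (simp_all add: real_sqrt_mult)
    show "num_real_roots (qbeta \<beta> c d) = (if d < sqrt x1 then 0 else if sqrt x2 \<le> d then 4 else 2)"
      if "0 < d" for d
      using count[OF that] less_sqrt_iff_power2_less[of d x2] that by auto
  qed (use zeros in simp)
qed

lemma qbeta_root_thresholds_c_zero:
  fixes \<beta> :: real
  assumes "0 < \<beta>"
  shows "{d. 0 \<le> d \<and> disc_qbeta \<beta> 0 d = 0} = {0, sqrt (27*\<beta>/8)}"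
    and "0 < d \<Longrightarrow> num_real_roots (qbeta \<beta> 0 d) = (if sqrt (27*\<beta>/8) \<le> d then 4 else 2)"
proof -
  have factor: "disc_qbeta_cubic \<beta> 0 x = \<beta>/2 * x^2 * (x - 27*\<beta>/8)" for x
    unfolding disc_qbeta_cubic_def by (simp add: algebra_simps power2_eq_square power3_eq_cube)
  have "{x. 0 \<le> x \<and> disc_qbeta_cubic \<beta> 0 x = 0} = {0, 27*\<beta>/8}"
    unfolding factor using assms by auto
  then show "{d. 0 \<le> d \<and> disc_qbeta \<beta> 0 d = 0} = {0, sqrt (27*\<beta>/8)}"
    using disc_qbeta_nonneg_zeros[of \<beta> 0] assms by simp
  assume "0 < d"
  define K where "K = \<beta>^3/2 * (d^2)^2"
  have "0 < K"
    unfolding K_def using assms \<open>0 < d\<close> by simp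
  have "disc_qbeta \<beta> 0 d = K * (d^2 - 27*\<beta>/8)"
    unfolding disc_qbeta_eq_cubic factor K_def by (simp add: power3_eq_cube power2_eq_square)
  then have "0 \<le> disc_qbeta \<beta> 0 d \<longleftrightarrow> 27*\<beta>/8 \<le> d^2"
    using \<open>0 < K\<close> by (simp add: zero_le_mult_iff)
  also have "\<dots> \<longleftrightarrow> sqrt (27*\<beta>/8) \<le> d"
    using less_sqrt_iff_power2_less[of d "27*\<beta>/8"] \<open>0 < d\<close> by auto
  finally show "num_real_roots (qbeta \<beta> 0 d) = (if sqrt (27*\<beta>/8) \<le> d then 4 else 2)"
    using num_real_roots_qbeta[of \<beta> d 0] assms \<open>0 < d\<close> by simp
qed

theorem lemma3p4:
  fixes c \<beta> :: real
  assumes "c \<ge> 0" and "\<beta> > 0"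
  shows "\<exists>(d1::real) (d2::ereal) (d3::ereal).
    (\<beta> < 4*c \<longrightarrow>
        {d. d \<ge> 0 \<and> disc_qbeta \<beta> c d = 0} = {d1}
      \<and> 0 < d1 \<and> d1 < 2 * sqrt c \<and> d2 = \<infinity> \<and> d3 = \<infinity>) \<and>
    (4*c \<le> \<beta> \<and> \<beta> < 8*c \<longrightarrow>
      (\<exists>r2 r3. d2 = ereal r2 \<and> d3 = ereal r3
        \<and> {d. d \<ge> 0 \<and> disc_qbeta \<beta> c d = 0} = {d1, r2, r3}
        \<and> 0 < d1 \<and> d1 < 2 * sqrt c
        \<and> 2 * sqrt c < r2 \<and> r2 \<le> 2 * sqrt \<beta> \<and> 2 * sqrt \<beta> \<le> r3)) \<and>
    (8*c \<le> \<beta> \<and> 0 < c \<longrightarrow>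
      (\<exists>r2. d2 = ereal r2 \<and> d3 = \<infinity>
        \<and> {d. d \<ge> 0 \<and> disc_qbeta \<beta> c d = 0} = {d1, r2}
        \<and> 0 < d1 \<and> d1 < 2 * sqrt c
        \<and> 2 * sqrt c < r2 \<and> r2 \<le> 2 * sqrt \<beta>)) \<and>
    (c = 0 \<longrightarrow>
        {d. d \<ge> 0 \<and> disc_qbeta \<beta> c d = 0} = {0, sqrt (27*\<beta>/8)}
      \<and> d1 = 0 \<and> d2 = ereal (sqrt (27*\<beta>/8)) \<and> d3 = \<infinity>) \<and>
    (\<forall>d>0.
        (d < d1 \<longrightarrow> num_real_roots (qbeta \<beta> c d) = 0)
      \<and> (d2 \<le> ereal d \<and> ereal d \<le> d3 \<longrightarrow> num_real_roots (qbeta \<beta> c d) = 4)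
      \<and> (\<not> d < d1 \<and> \<not> (d2 \<le> ereal d \<and> ereal d \<le> d3) \<longrightarrow>
           num_real_roots (qbeta \<beta> c d) = 2))"
proof -
  consider (c_zero) "c = 0" | (small) "0 < c" "\<beta> < 4*c" | (medium) "0 < c" "4*c \<le> \<beta>" "\<beta> < 8*c"
    | (large) "0 < c" "8*c \<le> \<beta>"
    using assms(1) by linarith
  then show ?thesis
  proof cases
    case c_zero
    then show ?thesis
      using qbeta_root_thresholds_c_zero[OF assms(2)] assms(2)
      by (intro exI[of _ 0] exI[of _ "ereal (sqrt (27*\<beta>/8))"] exI[of _ \<infinity>]) auto
  next
    case small
    then obtain d1 where "0 < d1" "d1 < 2 * sqrt c" "{d. 0 \<le> d \<and> disc_qbeta \<beta> c d = 0} = {d1}"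
      "\<And>d. 0 < d \<Longrightarrow> num_real_roots (qbeta \<beta> c d) = (if d < d1 then 0 else 2)"
      using qbeta_root_thresholds_small_beta assms(2) by blast
    with small show ?thesis
      by (intro exI[of _ d1] exI[of _ \<infinity>]) auto
  next
    case medium
    then obtain d1 d2 d3 where "0 < d1" "d1 < 2 * sqrt c" "2 * sqrt c < d2" "d2 \<le> 2 * sqrt \<beta>"
      "2 * sqrt \<beta> \<le> d3" "{d. 0 \<le> d \<and> disc_qbeta \<beta> c d = 0} = {d1, d2, d3}"
      "\<And>d. 0 < d \<Longrightarrow> num_real_roots (qbeta \<beta> c d) =
        (if d < d1 then 0 else if d2 \<le> d \<and> d \<le> d3 then 4 else 2)"
      using qbeta_root_thresholds_medium_beta by blast
    with medium show ?thesis
      by (intro exI[of _ d1] exI[of _ "ereal d2"] exI[of _ "ereal d3"]) auto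
  next
    case large
    then obtain d1 d2 where "0 < d1" "d1 < 2 * sqrt c" "2 * sqrt c < d2" "d2 \<le> 2 * sqrt \<beta>"
      "{d. 0 \<le> d \<and> disc_qbeta \<beta> c d = 0} = {d1, d2}"
      "\<And>d. 0 < d \<Longrightarrow> num_real_roots (qbeta \<beta> c d) = (if d < d1 then 0 else if d2 \<le> d then 4 else 2)"
      using qbeta_root_thresholds_large_beta by blast
    with large show ?thesis
      by (intro exI[of _ d1] exI[of _ "ereal d2"] exI[of _ \<infinity>]) auto
  qed
qed

end
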